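(* Consider the network and protocols described in the context, and let fairMAC$_\infty$ denote fairMAC with $P=Q=\infty$. Let $\tau\propto\sqrt{\sigma}$ and $\sigma\to0$. Then the asymptotic throughput per node and bit-cost of fairMAC$_\infty$ equal the operating point of Round Robin based CoopMAC: $$\mathsf{S}^{*\mathrm{fair}_\infty}=\mathsf{S}^{*\mathrm{coop}}=\frac{1}{\sum_{k\in\mathcal{D}}\frac{1}{R_k}+\sum_{k\in\mathcal{C}}\bigl(\frac{1}{R_{kh_k}}+\frac{1}{R_{h_k}}\bigr)},\qquad \mathsf{B}^{*\mathrm{fair}_\infty}_k=\mathsf{B}^{*\mathrm{coop}}_k=(H_k+1)u_k\mathcal{E}$$ for every node $k$, where $\mathcal{D}$ is the set of nodes without a helper, $\mathcal{C}$ the set of nodes with a helper, $H_k$ the number of nodes whose helper is $k$, and $u_k=1/R_k$ for $k\in\mathcal{D}$, $u_k=1/R_{kh_k}$ for $k\in\mathcal{C}$.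
   Context: Network model: $N$ nodes transmit data to a common access point (AP). For nodes $k,l$, $R_{kl}>0$ is the achievable rate from $k$ to $l$, and $R_k>0$ the rate from $k$ directly to the AP; rates are constant. Each packet carries 1 bit, so a transmission at rate $R$ lasts $1/R$. Node $h$ is the helper $h_k$ of $k$ iff $h=\arg\min_l(1/R_{kl}+1/R_l)$ and $1/R_{kh}+1/R_h<1/R_k$. All nodes transmit at the same power $\mathcal{E}$, are saturated, and access the medium by slotted CSMA with slot length $\sigma$ (normalized by packet size, so $\sigma\to0$ corresponds to packet lengths tending to infinity) and transmit probability $\tau$; a packet is lost iff another node transmits simultaneously; ACKs have negligible duration and are never lost. fairMAC (parameters $P,Q$): a node $k$ with helper $h$ keeps a pending-packet counter $p$; while $p\le P$ it sends its packet to $h$ at rate $R_{kh}$; on successful reception $h$ stores it in an infinite forwarding queue and sends a preACK, and $k$ increments $p$; if $p$ exceeds $P$, $k$ sends directly to the AP. When a helper $h$ wins the medium it sends at rate $R_h$ a joint packet containing one own packet and up to $Q$ packets from its forwarding queue; on success the AP sends a jointACK, $h$ removes those packets, and each source decrements $p$ by its number of forwarded packets. Nodes without helper transmit directly to the AP. Throughput $\mathsf{S}$: long-term own data bits per unit time successfully delivered per node (equal for all nodes). Bit-cost $\mathsf{B}_k=\bar{\mathcal{E}}_k/\mathsf{S}$, with $\bar{\mathcal{E}}_k$ equal to $\mathcal{E}$ times the long-term fraction of time node $k$ transmits (including forwarding). Starred quantities denote limits as $\sigma\to0$ with $\tau\propto\sqrt{\sigma}$. In Round Robin based CoopMAC nodes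 transmit in fixed cyclic order, each helped packet being forwarded immediately, giving per-node throughput $1/\sum_k s_k$ with $s_k$ the travel time of a packet of $k$, and bit-cost $(H_k+1)u_k\mathcal{E}$.
   Formalization: Every helper $h_k$ is assumed to have no helper of its own, so a node in $\mathcal{C}$ is never the helper of another node. The paper assumes this as well. *)

theory Defs
  imports "HOL-Probability.Probability"
begin

text \<open>Network: nodes 0..N-1. R k l = rate from node k to node l, Rd k = rate from k to the AP.
  A helper assignment hlp :: nat => nat option (None = no helper, i.e. node in D;
  Some h = node h is the helper h_k, i.e. node in C).\<close>

definition coop_cost :: "(nat \<Rightarrow> nat \<Rightarrow> real) \<Rightarrow> (nat \<Rightarrow> real) \<Rightarrow> nat \<Rightarrow> nat \<Rightarrow> real" where
  "coop_cost R Rd k l = 1 / R k l + 1 / Rd l"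

definition helper_assignment ::
  "nat \<Rightarrow> (nat \<Rightarrow> nat \<Rightarrow> real) \<Rightarrow> (nat \<Rightarrow> real) \<Rightarrow> (nat \<Rightarrow> nat option) \<Rightarrow> bool" where
  "helper_assignment N R Rd hlp \<longleftrightarrow>
     (\<forall>k<N. case hlp k of
        None \<Rightarrow> (\<forall>l<N. l \<noteq> k \<longrightarrow> \<not> coop_cost R Rd k l < 1 / Rd k)
      | Some h \<Rightarrow> h < N \<and> h \<noteq> k
                 \<and> (\<forall>l<N. l \<noteq> k \<longrightarrow> coop_cost R Rd k h \<le> coop_cost R Rd k l)
                 \<and> coop_cost R Rd k h < 1 / Rd k)"

definition helped_by :: "nat \<Rightarrow> (nat \<Rightarrow> nat option) \<Rightarrow> nat \<Rightarrow> nat set" where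
  "helped_by N hlp k = {j. j < N \<and> hlp j = Some k}"

definition num_helped :: "nat \<Rightarrow> (nat \<Rightarrow> nat option) \<Rightarrow> nat \<Rightarrow> nat" where
  "num_helped N hlp k = card (helped_by N hlp k)"

text \<open>State: p j = pending counter of node j = number of packets of j stored in the
  forwarding queue of its helper.\<close>
type_synonym fstate = "nat \<Rightarrow> nat"

definition tx_dur ::
  "nat \<Rightarrow> (nat \<Rightarrow> nat \<Rightarrow> real) \<Rightarrow> (nat \<Rightarrow> real) \<Rightarrow> (nat \<Rightarrow> nat option) \<Rightarrow> fstate \<Rightarrow> nat \<Rightarrow> real" where
  "tx_dur N R Rd hlp p k =
     (case hlp k of
        Some h \<Rightarrow> 1 / R k h
      | None \<Rightarrow> (1 + real (\<Sum>j\<in>helped_by N hlp k. p j)) / Rd k)"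

definition txset_pmf :: "nat \<Rightarrow> real \<Rightarrow> nat set pmf" where
  "txset_pmf N \<tau> =
     map_pmf (\<lambda>f. {k. k < N \<and> f k}) (Pi_pmf {..<N} False (\<lambda>_. bernoulli_pmf \<tau>))"

text \<open>Outcome of one (virtual) slot given state p and transmitting set T:
  (new state, duration, own bits delivered to the AP per node, transmit time per node).\<close>
definition slot_outcome ::
  "nat \<Rightarrow> (nat \<Rightarrow> nat \<Rightarrow> real) \<Rightarrow> (nat \<Rightarrow> real) \<Rightarrow> (nat \<Rightarrow> nat option) \<Rightarrow> real
   \<Rightarrow> fstate \<Rightarrow> nat set \<Rightarrow> fstate \<times> real \<times> (nat \<Rightarrow> real) \<times> (nat \<Rightarrow> real)" where
  "slot_outcome N R Rd hlp \<sigma> p T =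
     (if T = {} then (p, \<sigma>, \<lambda>_. 0, \<lambda>_. 0)
      else if card T = 1 then
        (let w = the_elem T; d = tx_dur N R Rd hlp p w in
         case hlp w of
           Some h \<Rightarrow> (p(w := Suc (p w)), d, \<lambda>_. 0, \<lambda>k. if k = w then d else 0)
         | None \<Rightarrow> (\<lambda>j. if j \<in> helped_by N hlp w then 0 else p j, d,
                    \<lambda>k. if k = w then 1 else if k \<in> helped_by N hlp w then real (p k) else 0,
                    \<lambda>k. if k = w then d else 0))
      else (p, Max (tx_dur N R Rd hlp p ` T), \<lambda>_. 0,
            \<lambda>k. if k \<in> T then tx_dur N R Rd hlp p k else 0))"

text \<open>Joint distribution after n slots, starting from empty queues:
  (state, elapsed time, cumulative delivered own bits, cumulative transmit time).\<close>
fun fair_run ::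
  "nat \<Rightarrow> (nat \<Rightarrow> nat \<Rightarrow> real) \<Rightarrow> (nat \<Rightarrow> real) \<Rightarrow> (nat \<Rightarrow> nat option) \<Rightarrow> real \<Rightarrow> real
   \<Rightarrow> nat \<Rightarrow> (fstate \<times> real \<times> (nat \<Rightarrow> real) \<times> (nat \<Rightarrow> real)) pmf" where
  "fair_run N R Rd hlp \<sigma> \<tau> 0 = return_pmf (\<lambda>_. 0, 0, \<lambda>_. 0, \<lambda>_. 0)"
| "fair_run N R Rd hlp \<sigma> \<tau> (Suc n) =
     fair_run N R Rd hlp \<sigma> \<tau> n \<bind>
       (\<lambda>(p, t, b, x). map_pmf (\<lambda>(p', d, b', x'). (p', t + d, \<lambda>k. b k + b' k, \<lambda>k. x k + x' k))
                         (map_pmf (slot_outcome N R Rd hlp \<sigma> p) (txset_pmf N \<tau>)))"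

definition exp_time where
  "exp_time N R Rd hlp \<sigma> \<tau> n =
     measure_pmf.expectation (fair_run N R Rd hlp \<sigma> \<tau> n) (\<lambda>s. fst (snd s))"

definition exp_bits where
  "exp_bits N R Rd hlp \<sigma> \<tau> n k =
     measure_pmf.expectation (fair_run N R Rd hlp \<sigma> \<tau> n) (\<lambda>s. fst (snd (snd s)) k)"

definition exp_txtime where
  "exp_txtime N R Rd hlp \<sigma> \<tau> n k =
     measure_pmf.expectation (fair_run N R Rd hlp \<sigma> \<tau> n) (\<lambda>s. snd (snd (snd s)) k)"

definition thr_seq where
  "thr_seq N R Rd hlp \<sigma> \<tau> k = (\<lambda>n. exp_bits N R Rd hlp \<sigma> \<tau> n k / exp_time N R Rd hlp \<sigma> \<tau> n)"

definition fair_S where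
  "fair_S N R Rd hlp \<sigma> \<tau> k = lim (thr_seq N R Rd hlp \<sigma> \<tau> k)"

definition txfrac_seq where
  "txfrac_seq N R Rd hlp \<sigma> \<tau> k = (\<lambda>n. exp_txtime N R Rd hlp \<sigma> \<tau> n k / exp_time N R Rd hlp \<sigma> \<tau> n)"

definition fair_B where
  "fair_B N R Rd hlp \<E> \<sigma> \<tau> k =
     (\<E> * lim (txfrac_seq N R Rd hlp \<sigma> \<tau> k)) / fair_S N R Rd hlp \<sigma> \<tau> k"

definition travel_time where
  "travel_time R Rd hlp k = (case hlp k of None \<Rightarrow> 1 / Rd k | Some h \<Rightarrow> 1 / R k h + 1 / Rd h)"

definition coop_S where
  "coop_S N R Rd hlp = 1 / (\<Sum>k<N. travel_time R Rd hlp k)"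

definition u_rate where
  "u_rate R Rd hlp k = (case hlp k of None \<Rightarrow> 1 / Rd k | Some h \<Rightarrow> 1 / R k h)"

definition coop_B where
  "coop_B N R Rd hlp \<E> k = (real (num_helped N hlp k) + 1) * u_rate R Rd hlp k * \<E>"

end

theory Submission
  imports Defs
begin

text \<open>With \<open>P = Q = \<infinity>\<close> the pending counters of fairMAC form a Markov chain driven by the
  random set of transmitters of each slot. A helped node transmits alone with probability
  \<open>q = \<tau>(1 - \<tau>)\<^sup>N\<^sup>-\<^sup>1\<close> per slot, and so does its helper, which then empties the node's share of the
  forwarding queue; hence the expected counter after \<open>i\<close> slots is \<open>1 - (1 - q)\<^sup>i \<rightarrow> 1\<close>. In the limit
  every node thus delivers \<open>q\<close> own bits per slot, and its expected transmit time per solo transmission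
  tends to \<open>(H\<^sub>k + 1) u\<^sub>k\<close>, its airtime in one Round Robin cycle. The expected slot duration is
  monotone in the counters, so by a monotone coupling it increases to a limit \<open>D\<close> between
  \<open>\<sigma> P\<^sub>i\<^sub>d\<^sub>l\<^sub>e + q \<Sum>\<^sub>k s\<^sub>k\<close> and that value plus \<open>P\<^sub>c\<^sub>o\<^sub>l\<^sub>l \<Sum>\<^sub>k s\<^sub>k\<close>. By Cesaro, the throughput is \<open>q / D\<close> and the
  bit-cost \<open>(H\<^sub>k + 1) u\<^sub>k \<E> \<tau> / q\<close>. When \<open>\<tau> \<rightarrow> 0\<close> with \<open>\<sigma> / \<tau> \<rightarrow> 0\<close>, in particular for \<open>\<tau> \<propto> \<surd>\<sigma>\<close>,
  both \<open>\<sigma> P\<^sub>i\<^sub>d\<^sub>l\<^sub>e / q\<close> and \<open>P\<^sub>c\<^sub>o\<^sub>l\<^sub>l / q\<close> vanish, so \<open>1 / S\<close> tends to \<open>\<Sum>\<^sub>k s\<^sub>k\<close> and \<open>\<tau> / q\<close> to \<open>1\<close>.\<close>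

section \<open>Finitely supported expectations and Cesaro means\<close>

lemma expectation_bind_pmf_finite:
  fixes f :: "'b \<Rightarrow> real"
  assumes "finite (set_pmf M)" and "\<And>x. x \<in> set_pmf M \<Longrightarrow> finite (set_pmf (K x))"
  shows "measure_pmf.expectation (M \<bind> K) f =
         measure_pmf.expectation M (\<lambda>x. measure_pmf.expectation (K x) f)"
  using assms
  by (simp add: pmf_expectation_bind[of "set_pmf M"] integral_measure_pmf[of "set_pmf M"] mult.commute)

lemma expectation_add_finite:
  fixes f g :: "'a \<Rightarrow> real"
  assumes "finite (set_pmf M)"
  shows "measure_pmf.expectation M (\<lambda>x. f x + g x) =
         measure_pmf.expectation M f + measure_pmf.expectation M g"
  by (rule Bochner_Integration.integral_add; rule integrable_measure_pmf_finite[OF assms])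

lemma LIMSEQ_Cesaro_mean:
  fixes a :: "nat \<Rightarrow> real"
  assumes "a \<longlonglongrightarrow> A"
  shows "(\<lambda>n. (\<Sum>i<n. a i) / n) \<longlonglongrightarrow> A"
proof (rule LIMSEQ_I)
  fix r :: real assume r: "r > 0"
  obtain M where M: "\<And>n. n \<ge> M \<Longrightarrow> \<bar>a n - A\<bar> < r/2"
    using LIMSEQ_D[OF assms, of "r/2"] r by (auto simp: dist_real_def)
  define K where "K = (\<Sum>i<M. \<bar>a i - A\<bar>)"
  obtain L :: nat where L: "L > 2 * K / r" using reals_Archimedean2 by blast
  show "\<exists>n0. \<forall>n\<ge>n0. norm ((\<Sum>i<n. a i) / real n - A) < r"
  proof (intro exI allI impI)
    fix n assume n: "n \<ge> max (Suc M) L"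
    have "\<bar>\<Sum>i<n. a i - A\<bar> \<le> (\<Sum>i<n. \<bar>a i - A\<bar>)" by (rule sum_abs)
    also have "\<dots> = K + (\<Sum>i\<in>{M..<n}. \<bar>a i - A\<bar>)"
    proof -
      have "{..<n} = {..<M} \<union> {M..<n}" using n by auto
      then show ?thesis unfolding K_def by (simp add: sum.union_disjoint ivl_disj_int)
    qed
    also have "(\<Sum>i\<in>{M..<n}. \<bar>a i - A\<bar>) \<le> (\<Sum>i\<in>{M..<n}. r/2)"
      using M by (intro sum_mono) (fastforce intro: less_imp_le)
    also have "\<dots> \<le> r/2 * n" using r n by simp
    also have "K < r/2 * n"
    proof -
      have "2 * K / r < n" using L n by linarith
      then show ?thesis using r by (simp add: field_simps)
    qed
    finally have "\<bar>\<Sum>i<n. a i - A\<bar> < r * n" by linarith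
    moreover have "(\<Sum>i<n. a i) / real n - A = (\<Sum>i<n. a i - A) / real n"
      using n by (simp add: sum_subtractf field_simps)
    ultimately show "norm ((\<Sum>i<n. a i) / real n - A) < r"
      using n by (simp add: abs_divide field_simps)
  qed
qed

lemma LIMSEQ_ratio_partial_sums:
  fixes a d :: "nat \<Rightarrow> real"
  assumes "a \<longlonglongrightarrow> A" "d \<longlonglongrightarrow> D" "D \<noteq> 0"
  shows "(\<lambda>n. (\<Sum>i<n. a i) / (\<Sum>i<n. d i)) \<longlonglongrightarrow> A / D"
proof -
  have "(\<lambda>n. ((\<Sum>i<n. a i) / n) / ((\<Sum>i<n. d i) / n)) \<longlonglongrightarrow> A / D"
    using assms by (intro tendsto_divide LIMSEQ_Cesaro_mean)
  moreover have "\<forall>\<^sub>F n in sequentially.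
      ((\<Sum>i<n. a i) / n) / ((\<Sum>i<n. d i) / n) = (\<Sum>i<n. a i) / (\<Sum>i<n. d i)"
    using eventually_gt_at_top[of "0::nat"] by eventually_elim simp
  ultimately show ?thesis by (rule Lim_transform_eventually)
qed

section \<open>The set of transmitters in a slot\<close>

definition idle_prob :: "nat \<Rightarrow> real \<Rightarrow> real" where
  "idle_prob N \<tau> = (1 - \<tau>) ^ N"

definition solo_prob :: "nat \<Rightarrow> real \<Rightarrow> real" where
  "solo_prob N \<tau> = \<tau> * (1 - \<tau>) ^ (N - 1)"

definition collision_prob :: "nat \<Rightarrow> real \<Rightarrow> real" where
  "collision_prob N \<tau> = 1 - idle_prob N \<tau> - real N * solo_prob N \<tau>"

lemma collision_prob_eq:
  "collision_prob N t = t * ((\<Sum>i<N. (1 - t) ^ i) - real N * (1 - t) ^ (N - 1))"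
  using one_diff_power_eq[of "1 - t" N]
  by (simp add: collision_prob_def idle_prob_def solo_prob_def algebra_simps)

lemma collision_over_solo_tendsto_0:
  "((\<lambda>t. collision_prob N t / solo_prob N t) \<longlongrightarrow> 0) (at_right 0)"
proof -
  let ?f = "\<lambda>t::real. ((\<Sum>i<N. (1 - t) ^ i) - real N * (1 - t) ^ (N - 1)) / (1 - t) ^ (N - 1)"
  have "(?f \<longlongrightarrow> ((\<Sum>i<N. (1 - 0) ^ i) - real N * (1 - 0) ^ (N - 1)) / (1 - 0) ^ (N - 1)) (at_right 0)"
    by (intro tendsto_intros) auto
  then have "(?f \<longlongrightarrow> 0) (at_right 0)" by simp
  moreover have "\<forall>\<^sub>F t in at_right 0. 0 < t \<and> t < (1::real)"
    by (auto simp: eventually_at_right_field intro!: exI[of _ 1])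
  then have "\<forall>\<^sub>F t in at_right 0. ?f t = collision_prob N t / solo_prob N t"
    by eventually_elim (simp add: collision_prob_eq solo_prob_def)
  ultimately show ?thesis by (rule Lim_transform_eventually)
qed

lemma set_pmf_txset_pmf: "set_pmf (txset_pmf N \<tau>) \<subseteq> Pow {..<N}"
  unfolding txset_pmf_def by auto

lemma finite_set_pmf_txset_pmf: "finite (set_pmf (txset_pmf N \<tau>))"
  using set_pmf_txset_pmf by (rule finite_subset) simp

lemma expectation_txset_pmf:
  "measure_pmf.expectation (txset_pmf N \<tau>) g = (\<Sum>T\<in>Pow {..<N}. g T * pmf (txset_pmf N \<tau>) T)"
  by (rule integral_measure_pmf_real) (use set_pmf_txset_pmf in auto)

lemma expectation_txset_pmf_mono:
  fixes f g :: "nat set \<Rightarrow> real"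
  assumes "\<And>T. T \<subseteq> {..<N} \<Longrightarrow> f T \<le> g T"
  shows "measure_pmf.expectation (txset_pmf N \<tau>) f \<le> measure_pmf.expectation (txset_pmf N \<tau>) g"
  using assms by (simp only: expectation_txset_pmf) (auto intro!: sum_mono mult_right_mono)

lemma expectation_txset_pmf_cong:
  fixes f g :: "nat set \<Rightarrow> real"
  assumes "\<And>T. T \<subseteq> {..<N} \<Longrightarrow> f T = g T"
  shows "measure_pmf.expectation (txset_pmf N \<tau>) f = measure_pmf.expectation (txset_pmf N \<tau>) g"
  using assms by (simp only: expectation_txset_pmf) (auto intro!: sum.cong)

context
  fixes N :: nat and \<tau> :: real
  assumes tau: "0 \<le> \<tau>" "\<tau> \<le> 1"
begin

lemma pmf_txset_pmf:
  assumes "T \<subseteq> {..<N}"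
  shows "pmf (txset_pmf N \<tau>) T = (\<Prod>k<N. if k \<in> T then \<tau> else 1 - \<tau>)"
proof -
  define P where "P = Pi_pmf {..<N} False (\<lambda>_. bernoulli_pmf \<tau>)"
  define chi where "chi = (\<lambda>k. k \<in> T)"
  have "set_pmf P \<subseteq> {f. \<forall>x. x \<notin> {..<N} \<longrightarrow> f x = False}"
    unfolding P_def by (rule set_Pi_pmf_subset) simp
  then have "(\<lambda>f. {k. k < N \<and> f k}) -` {T} \<inter> set_pmf P = {chi} \<inter> set_pmf P"
    using assms by (auto simp: chi_def fun_eq_iff)
  then have "pmf (txset_pmf N \<tau>) T = measure P ({chi} \<inter> set_pmf P)"
    unfolding txset_pmf_def P_def pmf_map by (metis measure_Int_set_pmf)
  also have "\<dots> = pmf P chi" by (simp add: measure_Int_set_pmf measure_pmf_single)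
  also have "\<dots> = (\<Prod>k<N. pmf (bernoulli_pmf \<tau>) (chi k))"
    unfolding P_def by (subst pmf_Pi') (use assms in \<open>auto simp: chi_def\<close>)
  also have "\<dots> = (\<Prod>k<N. if k \<in> T then \<tau> else 1 - \<tau>)"
    using tau by (intro prod.cong) (auto simp: chi_def)
  finally show ?thesis .
qed

lemma pmf_txset_pmf_empty: "pmf (txset_pmf N \<tau>) {} = idle_prob N \<tau>"
  by (simp add: pmf_txset_pmf idle_prob_def)

lemma pmf_txset_pmf_singleton:
  assumes "w < N"
  shows "pmf (txset_pmf N \<tau>) {w} = solo_prob N \<tau>"
proof -
  have "(\<Prod>k<N. if k \<in> {w} then \<tau> else 1 - \<tau>) = \<tau> * (\<Prod>k\<in>{..<N} - {w}. 1 - \<tau>)"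
    using assms by (subst prod.remove[of _ w]) (auto intro!: prod.cong)
  then show ?thesis
    using assms by (simp add: pmf_txset_pmf solo_prob_def)
qed

lemma expectation_txset_pmf_by_card:
  "measure_pmf.expectation (txset_pmf N \<tau>) h =
     idle_prob N \<tau> * h {} + solo_prob N \<tau> * (\<Sum>w<N. h {w})
     + (\<Sum>T\<in>{T\<in>Pow {..<N}. 2 \<le> card T}. h T * pmf (txset_pmf N \<tau>) T)"
proof -
  define B where "B = {T\<in>Pow {..<N}. 2 \<le> card T}"
  have split: "Pow {..<N} = insert {} ((\<lambda>w. {w}) ` {..<N} \<union> B)"
  proof (intro equalityI subsetI)
    fix T assume T: "T \<in> Pow {..<N}"
    then have "finite T" by (auto intro: finite_subset)
    then consider "T = {}" | "card T = 1" | "2 \<le> card T"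
      by (cases "card T = 0"; cases "card T = 1") auto
    then show "T \<in> insert {} ((\<lambda>w. {w}) ` {..<N} \<union> B)"
      by cases (use T in \<open>auto simp: B_def card_1_singleton_iff\<close>)
  qed (auto simp: B_def)
  have "(\<lambda>w. {w}) ` {..<N} \<inter> B = {}" "finite B" "{} \<notin> B" by (auto simp: B_def)
  then have "(\<Sum>T\<in>Pow {..<N}. h T * pmf (txset_pmf N \<tau>) T) =
      h {} * pmf (txset_pmf N \<tau>) {} + (\<Sum>T\<in>(\<lambda>w. {w}) ` {..<N}. h T * pmf (txset_pmf N \<tau>) T)
      + (\<Sum>T\<in>B. h T * pmf (txset_pmf N \<tau>) T)"
    unfolding split by (subst sum.insert) (auto simp: sum.union_disjoint)
  also have "(\<Sum>T\<in>(\<lambda>w. {w}) ` {..<N}. h T * pmf (txset_pmf N \<tau>) T)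
      = (\<Sum>w<N. h {w} * pmf (txset_pmf N \<tau>) {w})"
    by (simp add: sum.reindex)
  finally show ?thesis
    unfolding B_def
    by (simp add: expectation_txset_pmf pmf_txset_pmf_empty pmf_txset_pmf_singleton
        sum_distrib_left mult.commute)
qed

lemma expectation_txset_pmf_solo:
  assumes "\<And>T. T \<subseteq> {..<N} \<Longrightarrow> card T \<noteq> 1 \<Longrightarrow> h T = 0"
  shows "measure_pmf.expectation (txset_pmf N \<tau>) h = solo_prob N \<tau> * (\<Sum>w<N. h {w})"
  using assms by (simp add: expectation_txset_pmf_by_card)

lemma sum_pmf_txset_pmf_collision:
  "(\<Sum>T\<in>{T\<in>Pow {..<N}. 2 \<le> card T}. pmf (txset_pmf N \<tau>) T) = collision_prob N \<tau>"
  using expectation_txset_pmf_by_card[of "\<lambda>_. 1"] by (simp add: collision_prob_def algebra_simps)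

lemma collision_prob_nonneg: "0 \<le> collision_prob N \<tau>"
  by (simp flip: sum_pmf_txset_pmf_collision add: sum_nonneg)

lemma expectation_txset_pmf_member:
  assumes "k < N"
  shows "measure_pmf.expectation (txset_pmf N \<tau>) (\<lambda>T. if k \<in> T then x else 0) = \<tau> * x"
proof -
  have "measure_pmf.expectation (txset_pmf N \<tau>) (\<lambda>T. if k \<in> T then x else 0)
      = measure_pmf.expectation (map_pmf (\<lambda>f. f k) (Pi_pmf {..<N} False (\<lambda>_. bernoulli_pmf \<tau>)))
          (\<lambda>b. if b then x else 0)"
    unfolding txset_pmf_def using assms by simp
  also have "\<dots> = \<tau> * x"
    using assms tau by (subst Pi_pmf_component) auto
  finally show ?thesis .
qed
end

section \<open>fairMAC at fixed slot length and transmit probability\<close>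

type_synonym fsnapshot = "fstate \<times> real \<times> (nat \<Rightarrow> real) \<times> (nat \<Rightarrow> real)"

definition accumulate_slot :: "fsnapshot \<Rightarrow> fsnapshot \<Rightarrow> fsnapshot" where
  "accumulate_slot s r = (fst r, fst (snd s) + fst (snd r),
     \<lambda>k. fst (snd (snd s)) k + fst (snd (snd r)) k, \<lambda>k. snd (snd (snd s)) k + snd (snd (snd r)) k)"

locale fairmac_network =
  fixes N :: nat and R :: "nat \<Rightarrow> nat \<Rightarrow> real" and Rd :: "nat \<Rightarrow> real"
    and hlp :: "nat \<Rightarrow> nat option" and \<sigma> \<tau> :: real
  assumes tau: "0 < \<tau>" "\<tau> < 1" and sigma_pos: "0 < \<sigma>"
    and Rd_pos: "\<And>k. k < N \<Longrightarrow> 0 < Rd k"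
    and helper_rate_pos: "\<And>k h. k < N \<Longrightarrow> hlp k = Some h \<Longrightarrow> 0 < R k h"
    and helper_less: "\<And>k h. k < N \<Longrightarrow> hlp k = Some h \<Longrightarrow> h < N"
    and helper_direct: "\<And>k h. k < N \<Longrightarrow> hlp k = Some h \<Longrightarrow> hlp h = None"
begin

abbreviation "txs \<equiv> txset_pmf N \<tau>"
abbreviation "q \<equiv> solo_prob N \<tau>"
abbreviation "helped \<equiv> helped_by N hlp"
abbreviation "u \<equiv> u_rate R Rd hlp"
abbreviation "dur \<equiv> tx_dur N R Rd hlp"
abbreviation "slot_next p T \<equiv> fst (slot_outcome N R Rd hlp \<sigma> p T)"
abbreviation "slot_dur p T \<equiv> fst (snd (slot_outcome N R Rd hlp \<sigma> p T))"
abbreviation "slot_bits p T \<equiv> fst (snd (snd (slot_outcome N R Rd hlp \<sigma> p T)))"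
abbreviation "slot_txtime p T \<equiv> snd (snd (snd (slot_outcome N R Rd hlp \<sigma> p T)))"

lemma helped_by_helper_empty: "hlp w = Some h \<Longrightarrow> helped w = {}"
  using helper_direct by (fastforce simp: helped_by_def)

lemma tx_dur_eq: "dur p w = (1 + real (\<Sum>j\<in>helped w. p j)) * u w"
  by (cases "hlp w") (auto simp: tx_dur_def u_rate_def helped_by_helper_empty)

lemma u_rate_pos: "w < N \<Longrightarrow> 0 < u w"
  using Rd_pos helper_rate_pos by (cases "hlp w") (auto simp: u_rate_def)

lemma tx_dur_nonneg: "w < N \<Longrightarrow> 0 \<le> dur p w"
  using u_rate_pos[of w] by (simp add: tx_dur_eq sum_nonneg add_nonneg_nonneg)

lemma tx_dur_mono: "w < N \<Longrightarrow> p \<le> p' \<Longrightarrow> dur p w \<le> dur p' w"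
  using u_rate_pos[of w] by (auto simp: tx_dur_eq le_fun_def intro!: mult_right_mono sum_mono)

lemma slot_outcome_singleton:
  "slot_outcome N R Rd hlp \<sigma> p {w} =
     (case hlp w of
        Some h \<Rightarrow> (p(w := Suc (p w)), dur p w, \<lambda>_. 0, \<lambda>k. if k = w then dur p w else 0)
      | None \<Rightarrow> (\<lambda>j. if j \<in> helped w then 0 else p j, dur p w,
                 \<lambda>k. if k = w then 1 else if k \<in> helped w then real (p k) else 0,
                 \<lambda>k. if k = w then dur p w else 0))"
  by (simp add: slot_outcome_def Let_def)

lemma slot_dur_singleton: "slot_dur p {w} = dur p w"
  by (simp add: slot_outcome_singleton split: option.split)

definition collision_time :: "fstate \<Rightarrow> real" where
  "collision_time p = (\<Sum>T\<in>{T\<in>Pow {..<N}. 2 \<le> card T}. slot_dur p T * pmf txs T)"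

lemma expectation_slot_dur:
  "measure_pmf.expectation txs (slot_dur p) =
     \<sigma> * idle_prob N \<tau> + q * (\<Sum>w<N. dur p w) + collision_time p"
  using tau by (simp add: expectation_txset_pmf_by_card collision_time_def slot_dur_singleton)
      (simp add: slot_outcome_def)

lemma Max_tx_dur_le_sum:
  assumes "T \<subseteq> {..<N}" "T \<noteq> {}"
  shows "0 \<le> Max (dur p ` T) \<and> Max (dur p ` T) \<le> (\<Sum>w<N. dur p w)"
proof -
  have "finite T" using assms(1) by (rule finite_subset) simp
  then have "Max (dur p ` T) \<in> dur p ` T" using assms(2) by (intro Max_in) auto
  then obtain w where w: "w \<in> T" "Max (dur p ` T) = dur p w" by auto
  with assms(1) have "w < N" by auto
  then show ?thesis
    using w tx_dur_nonneg by (auto intro: member_le_sum)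
qed

lemma collision_time_bounds:
  "0 \<le> collision_time p \<and> collision_time p \<le> collision_prob N \<tau> * (\<Sum>w<N. dur p w)"
proof -
  have dur_bounds: "0 \<le> slot_dur p T \<and> slot_dur p T \<le> (\<Sum>w<N. dur p w)"
    if "T \<in> {T\<in>Pow {..<N}. 2 \<le> card T}" for T
    using that Max_tx_dur_le_sum[of T p] by (auto simp: slot_outcome_def)
  have "collision_time p \<le> (\<Sum>T\<in>{T\<in>Pow {..<N}. 2 \<le> card T}. pmf txs T) * (\<Sum>w<N. dur p w)"
    unfolding collision_time_def sum_distrib_right using dur_bounds
    by (intro sum_mono) (auto simp: mult.commute intro: mult_left_mono)
  also have "\<dots> = collision_prob N \<tau> * (\<Sum>w<N. dur p w)"
    using sum_pmf_txset_pmf_collision[of \<tau> N] tau by (simp add: sum_distrib_right[symmetric])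
  finally show ?thesis
    using dur_bounds unfolding collision_time_def by (auto intro: sum_nonneg)
qed

lemma expectation_slot_bits:
  assumes "k < N"
  shows "measure_pmf.expectation txs (\<lambda>T. slot_bits p T k) =
           q * (case hlp k of None \<Rightarrow> 1 | Some _ \<Rightarrow> real (p k))"
proof -
  have "measure_pmf.expectation txs (\<lambda>T. slot_bits p T k) = q * (\<Sum>w<N. slot_bits p {w} k)"
    using tau by (intro expectation_txset_pmf_solo) (auto simp: slot_outcome_def)
  also have "(\<Sum>w<N. slot_bits p {w} k) = (case hlp k of None \<Rightarrow> 1 | Some _ \<Rightarrow> real (p k))"
  proof (cases "hlp k")
    case None
    then have "slot_bits p {w} k = (if w = k then 1 else 0)" for w
      by (auto simp: slot_outcome_singleton helped_by_def split: option.split)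
    then show ?thesis using None assms by simp
  next
    case (Some h)
    then have "slot_bits p {w} k = (if w = h then real (p k) else 0)" for w
      using assms helper_direct[OF assms Some]
      by (auto simp: slot_outcome_singleton helped_by_def split: option.split)
    then show ?thesis using Some assms helper_less by simp
  qed
  finally show ?thesis .
qed

lemma expectation_slot_next:
  assumes "j < N" "hlp j = Some h"
  shows "measure_pmf.expectation txs (\<lambda>T. real (slot_next p T j)) = real (p j) + q * (1 - real (p j))"
proof -
  have "measure_pmf.expectation txs (\<lambda>T. real (slot_next p T j) - real (p j))
      = q * (\<Sum>w<N. real (slot_next p {w} j) - real (p j))"
    using tau by (intro expectation_txset_pmf_solo) (auto simp: slot_outcome_def)
  also have "(\<Sum>w<N. real (slot_next p {w} j) - real (p j))
      = (\<Sum>w<N. (if w = j then 1 else 0) + (if w = h then - real (p j) else 0))"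
    using assms helper_direct[OF assms]
    by (intro sum.cong) (auto simp: slot_outcome_singleton helped_by_def split: option.split)
  also have "\<dots> = 1 - real (p j)"
    using assms helper_less[OF assms] by (simp add: sum.distrib)
  finally show ?thesis
    using expectation_add_finite[OF finite_set_pmf_txset_pmf,
        where f = "\<lambda>_. real (p j)" and g = "\<lambda>T. real (slot_next p T j) - real (p j)"] by simp
qed

lemma expectation_slot_txtime:
  assumes "k < N"
  shows "measure_pmf.expectation txs (\<lambda>T. slot_txtime p T k) = \<tau> * dur p k"
proof -
  have "measure_pmf.expectation txs (\<lambda>T. slot_txtime p T k) =
        measure_pmf.expectation txs (\<lambda>T. if k \<in> T then dur p k else 0)"
    by (rule expectation_txset_pmf_cong)
      (auto simp: slot_outcome_def Let_def card_1_singleton_iff split: option.split)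
  also have "\<dots> = \<tau> * dur p k"
    using tau assms by (simp add: expectation_txset_pmf_member)
  finally show ?thesis .
qed

lemma slot_next_mono:
  assumes "p \<le> p'"
  shows "slot_next p T \<le> slot_next p' T"
proof (cases "card T = 1")
  case True
  then obtain w where "T = {w}" by (auto simp: card_1_singleton_iff)
  then show ?thesis
    using assms by (auto simp: slot_outcome_singleton le_fun_def split: option.split)
next
  case False
  then show ?thesis using assms by (simp add: slot_outcome_def)
qed

lemma slot_dur_mono:
  assumes "T \<subseteq> {..<N}" "p \<le> p'"
  shows "slot_dur p T \<le> slot_dur p' T"
proof -
  have le: "w \<in> T \<Longrightarrow> dur p w \<le> dur p' w" for w
    using assms by (auto intro: tx_dur_mono)
  show ?thesis
  proof (cases "card T = 1")
    case True
    then obtain w where "T = {w}" by (auto simp: card_1_singleton_iff)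
    then show ?thesis using le by (simp add: slot_dur_singleton)
  next
    case False
    have "finite T" using assms(1) by (rule finite_subset) simp
    have "Max (dur p ` T) \<le> Max (dur p' ` T)" if "T \<noteq> {}"
    proof (rule Max.boundedI)
      fix a assume "a \<in> dur p ` T"
      then obtain w where w: "w \<in> T" "a = dur p w" by auto
      have "dur p' w \<le> Max (dur p' ` T)" using \<open>finite T\<close> w(1) by (intro Max_ge) auto
      then show "a \<le> Max (dur p' ` T)" using le[OF w(1)] w(2) by linarith
    qed (use that \<open>finite T\<close> in auto)
    then show ?thesis using False by (simp add: slot_outcome_def)
  qed
qed

primrec pending_pmf :: "nat \<Rightarrow> fstate \<Rightarrow> fstate pmf" where
  "pending_pmf 0 p = return_pmf p"
| "pending_pmf (Suc n) p = pending_pmf n p \<bind> (\<lambda>p'. map_pmf (slot_next p') txs)"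

lemma finite_set_pmf_pending_pmf: "finite (set_pmf (pending_pmf n p))"
  by (induction n) (auto simp: finite_set_pmf_txset_pmf)

lemma pending_pmf_Suc': "pending_pmf (Suc n) p = txs \<bind> (\<lambda>T. pending_pmf n (slot_next p T))"
proof (induction n arbitrary: p)
  case 0
  show ?case by (simp add: map_pmf_def bind_return_pmf)
next
  case (Suc n)
  have "pending_pmf (Suc (Suc n)) p
      = (txs \<bind> (\<lambda>T. pending_pmf n (slot_next p T))) \<bind> (\<lambda>p'. map_pmf (slot_next p') txs)"
    using Suc by simp
  then show ?case by (simp add: bind_assoc_pmf)
qed

lemma expectation_pending_pmf_Suc:
  "measure_pmf.expectation (pending_pmf (Suc n) p) (f :: fstate \<Rightarrow> real)
     = measure_pmf.expectation (pending_pmf n p)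
         (\<lambda>p'. measure_pmf.expectation txs (\<lambda>T. f (slot_next p' T)))"
  by (simp add: expectation_bind_pmf_finite finite_set_pmf_pending_pmf finite_set_pmf_txset_pmf)

lemma expectation_pending_pmf_Suc':
  "measure_pmf.expectation (pending_pmf (Suc n) p) (f :: fstate \<Rightarrow> real)
     = measure_pmf.expectation txs (\<lambda>T. measure_pmf.expectation (pending_pmf n (slot_next p T)) f)"
  unfolding pending_pmf_Suc'
  by (simp add: expectation_bind_pmf_finite finite_set_pmf_pending_pmf finite_set_pmf_txset_pmf)

lemma expectation_pending_pmf_mono:
  fixes G :: "fstate \<Rightarrow> real"
  assumes "mono G" "p \<le> p'"
  shows "measure_pmf.expectation (pending_pmf n p) G \<le> measure_pmf.expectation (pending_pmf n p') G"
  using assms(2)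
proof (induction n arbitrary: p p')
  case 0
  then show ?case using assms(1) by (simp add: mono_def)
next
  case (Suc n)
  then show ?case
    unfolding expectation_pending_pmf_Suc'
    by (intro expectation_txset_pmf_mono Suc.IH slot_next_mono)
qed

text \<open>Monotone coupling: starting one slot later is the same as starting from the state
  reached after one slot, which dominates the empty state.\<close>
lemma expectation_pending_pmf_le_Suc:
  fixes G :: "fstate \<Rightarrow> real"
  assumes "mono G"
  shows "measure_pmf.expectation (pending_pmf n (\<lambda>_. 0)) G
           \<le> measure_pmf.expectation (pending_pmf (Suc n) (\<lambda>_. 0)) G"
  unfolding expectation_pending_pmf_Suc'
  using expectation_txset_pmf_mono[where f = "\<lambda>_. measure_pmf.expectation (pending_pmf n (\<lambda>_. 0)) G"]
    expectation_pending_pmf_mono[OF assms]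
  by (simp add: le_fun_def)

abbreviation "run \<equiv> fair_run N R Rd hlp \<sigma> \<tau>"

lemma finite_set_pmf_fair_run: "finite (set_pmf (run n))"
  by (induction n) (auto simp: finite_set_pmf_txset_pmf split_beta)

lemma map_fst_fair_run: "map_pmf fst (run n) = pending_pmf n (\<lambda>_. 0)"
proof (induction n)
  case (Suc n)
  have "map_pmf fst (run (Suc n)) = map_pmf fst (run n) \<bind> (\<lambda>p. map_pmf (slot_next p) txs)"
    by (simp add: map_bind_pmf bind_map_pmf split_beta map_pmf_comp)
  then show ?case using Suc by simp
qed simp

lemma fair_run_Suc:
  "run (Suc n) = run n \<bind> (\<lambda>s. map_pmf (accumulate_slot s \<circ> slot_outcome N R Rd hlp \<sigma> (fst s)) txs)"
  by (auto simp: accumulate_slot_def split_beta map_pmf_comp o_def intro!: bind_pmf_cong map_pmf_cong)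

lemma expectation_fair_run_additive:
  fixes F G :: "fsnapshot \<Rightarrow> real"
  assumes F_init: "F (\<lambda>_. 0, 0, \<lambda>_. 0, \<lambda>_. 0) = 0"
    and F_step: "\<And>s r. F (accumulate_slot s r) = F s + G r"
  shows "measure_pmf.expectation (run n) F =
    (\<Sum>i<n. measure_pmf.expectation (pending_pmf i (\<lambda>_. 0))
             (\<lambda>p. measure_pmf.expectation txs (\<lambda>T. G (slot_outcome N R Rd hlp \<sigma> p T))))"
proof (induction n)
  case (Suc n)
  let ?G = "\<lambda>p. measure_pmf.expectation txs (\<lambda>T. G (slot_outcome N R Rd hlp \<sigma> p T))"
  have "measure_pmf.expectation (run (Suc n)) F =
      measure_pmf.expectation (run n) (\<lambda>s. F s + ?G (fst s))"
    unfolding fair_run_Suc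
    by (simp add: expectation_bind_pmf_finite finite_set_pmf_fair_run finite_set_pmf_txset_pmf
        F_step expectation_add_finite)
  also have "\<dots> = measure_pmf.expectation (run n) F + measure_pmf.expectation (pending_pmf n (\<lambda>_. 0)) ?G"
    by (simp add: expectation_add_finite finite_set_pmf_fair_run flip: map_fst_fair_run)
  finally show ?case using Suc by simp
qed (simp add: F_init)

abbreviation "H \<equiv> num_helped N hlp"

definition mean_slot_dur :: "nat \<Rightarrow> real" where
  "mean_slot_dur i = measure_pmf.expectation (pending_pmf i (\<lambda>_. 0))
     (\<lambda>p. measure_pmf.expectation txs (slot_dur p))"

definition mean_slot_bits :: "nat \<Rightarrow> nat \<Rightarrow> real" where
  "mean_slot_bits k i = measure_pmf.expectation (pending_pmf i (\<lambda>_. 0))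
     (\<lambda>p. measure_pmf.expectation txs (\<lambda>T. slot_bits p T k))"

definition mean_slot_txtime :: "nat \<Rightarrow> nat \<Rightarrow> real" where
  "mean_slot_txtime k i = measure_pmf.expectation (pending_pmf i (\<lambda>_. 0))
     (\<lambda>p. measure_pmf.expectation txs (\<lambda>T. slot_txtime p T k))"

lemma exp_time_eq_sum: "exp_time N R Rd hlp \<sigma> \<tau> n = (\<Sum>i<n. mean_slot_dur i)"
  unfolding exp_time_def mean_slot_dur_def
  by (rule expectation_fair_run_additive) (simp_all add: accumulate_slot_def)

lemma exp_bits_eq_sum: "exp_bits N R Rd hlp \<sigma> \<tau> n k = (\<Sum>i<n. mean_slot_bits k i)"
  unfolding exp_bits_def mean_slot_bits_def
  by (rule expectation_fair_run_additive) (simp_all add: accumulate_slot_def)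

lemma exp_txtime_eq_sum: "exp_txtime N R Rd hlp \<sigma> \<tau> n k = (\<Sum>i<n. mean_slot_txtime k i)"
  unfolding exp_txtime_def mean_slot_txtime_def
  by (rule expectation_fair_run_additive) (simp_all add: accumulate_slot_def)

lemma solo_prob_bounds: "0 < q" "q < 1"
proof -
  have "0 < (1 - \<tau>) ^ (N - 1)" "(1 - \<tau>) ^ (N - 1) \<le> 1"
    using tau by (simp_all add: power_le_one)
  then have "0 < q" "q \<le> \<tau>"
    using tau unfolding solo_prob_def by (auto intro: mult_left_le)
  then show "0 < q" "q < 1" using tau by auto
qed

definition mean_pending :: "nat \<Rightarrow> real" where
  "mean_pending i = 1 - (1 - q) ^ i"

lemma mean_pending_bounds: "0 \<le> mean_pending i" "mean_pending i \<le> 1"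
  using solo_prob_bounds by (simp_all add: mean_pending_def power_le_one)

lemma mean_pending_tendsto: "mean_pending \<longlonglongrightarrow> 1"
proof -
  have "(\<lambda>i. (1 - q) ^ i) \<longlonglongrightarrow> 0"
    using solo_prob_bounds by (intro LIMSEQ_power_zero) auto
  then show ?thesis
    unfolding mean_pending_def[abs_def] using tendsto_diff[OF tendsto_const] by fastforce
qed

text \<open>The forwarding queue of a helped node is emptied by every solo transmission of its helper
  and grows by one with every solo transmission of the node itself, each of probability q.\<close>
lemma expectation_pending_count:
  assumes "j < N" "hlp j = Some h"
  shows "measure_pmf.expectation (pending_pmf i (\<lambda>_. 0)) (\<lambda>p. real (p j)) = mean_pending i"
proof (induction i)
  case (Suc i)
  have "measure_pmf.expectation (pending_pmf (Suc i) (\<lambda>_. 0)) (\<lambda>p. real (p j))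
      = measure_pmf.expectation (pending_pmf i (\<lambda>_. 0)) (\<lambda>p. q + (1 - q) * real (p j))"
    unfolding expectation_pending_pmf_Suc expectation_slot_next[OF assms]
    by (simp add: algebra_simps)
  also have "\<dots> = q + (1 - q) * mean_pending i"
    by (simp add: expectation_add_finite finite_set_pmf_pending_pmf Suc)
  finally show ?case by (simp add: mean_pending_def algebra_simps)
qed (simp add: mean_pending_def)

lemma expectation_tx_dur:
  assumes "w < N"
  shows "measure_pmf.expectation (pending_pmf i (\<lambda>_. 0)) (\<lambda>p. dur p w) =
           (1 + real (H w) * mean_pending i) * u w"
proof -
  have "measure_pmf.expectation (pending_pmf i (\<lambda>_. 0)) (\<lambda>p. dur p w)
      = u w + u w * (\<Sum>j\<in>helped w. measure_pmf.expectation (pending_pmf i (\<lambda>_. 0)) (\<lambda>p. real (p j)))"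
    by (simp add: tx_dur_eq algebra_simps finite_set_pmf_pending_pmf
        Bochner_Integration.integral_sum integrable_measure_pmf_finite)
  also have "\<dots> = u w + u w * (real (H w) * mean_pending i)"
    by (simp add: expectation_pending_count helped_by_def num_helped_def)
  finally show ?thesis by (simp add: algebra_simps)
qed

text \<open>Double counting: the forwarded packets of node j are charged to its helper h, at the
  helper's own rate, which is exactly the second hop of j's travel time.\<close>
lemma sum_airtime_eq_sum_travel_time:
  "(\<Sum>w<N. (1 + real (H w)) * u w) = (\<Sum>k<N. travel_time R Rd hlp k)"
proof -
  have "real (H w) * u w = (\<Sum>j<N. if hlp j = Some w then u w else 0)" for w
  proof -
    have "helped w = {j\<in>{..<N}. hlp j = Some w}" by (auto simp: helped_by_def)
    then show ?thesis
      by (simp add: num_helped_def sum.inter_filter[symmetric])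
  qed
  then have "(\<Sum>w<N. real (H w) * u w) = (\<Sum>w<N. \<Sum>j<N. if hlp j = Some w then u w else 0)"
    by simp
  also have "\<dots> = (\<Sum>j<N. \<Sum>w<N. if hlp j = Some w then u w else 0)"
    by (rule sum.swap)
  also have "\<dots> = (\<Sum>j<N. case hlp j of None \<Rightarrow> 0 | Some h \<Rightarrow> 1 / Rd h)"
  proof (rule sum.cong[OF refl])
    fix j assume j: "j \<in> {..<N}"
    show "(\<Sum>w<N. if hlp j = Some w then u w else 0) = (case hlp j of None \<Rightarrow> 0 | Some h \<Rightarrow> 1 / Rd h)"
    proof (cases "hlp j")
      case (Some h)
      have "h < N" "hlp h = None" using helper_less[of j h] helper_direct[of j h] j Some by auto
      then have "(\<Sum>w<N. if hlp j = Some w then u w else 0) = u h" using Some by simp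
      with Some \<open>hlp h = None\<close> show ?thesis by (simp add: u_rate_def)
    qed simp
  qed
  finally have "(\<Sum>w<N. real (H w) * u w) = (\<Sum>j<N. case hlp j of None \<Rightarrow> 0 | Some h \<Rightarrow> 1 / Rd h)" .
  moreover have "travel_time R Rd hlp k = u k + (case hlp k of None \<Rightarrow> 0 | Some h \<Rightarrow> 1 / Rd h)" for k
    by (cases "hlp k") (simp_all add: travel_time_def u_rate_def)
  ultimately show ?thesis
    by (simp add: distrib_right sum.distrib)
qed

definition round_airtime :: "nat \<Rightarrow> real" where
  "round_airtime i = (\<Sum>w<N. (1 + real (H w) * mean_pending i) * u w)"

abbreviation "round_time \<equiv> \<Sum>k<N. travel_time R Rd hlp k"

lemma travel_time_pos: "k < N \<Longrightarrow> 0 < travel_time R Rd hlp k"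
proof (cases "hlp k")
  case (Some h)
  moreover assume "k < N"
  ultimately have "0 < R k h" "0 < Rd h"
    using helper_rate_pos[of k h] helper_less[of k h] Rd_pos[of h] by auto
  with Some show ?thesis by (simp add: travel_time_def add_pos_pos)
qed (simp add: travel_time_def Rd_pos)

lemma round_time_pos: "0 < N \<Longrightarrow> 0 < round_time"
  using travel_time_pos by (intro sum_pos) auto

lemma round_airtime_bounds: "0 \<le> round_airtime i" "round_airtime i \<le> round_time"
proof -
  have "0 \<le> (1 + real (H w) * mean_pending i) * u w" "(1 + real (H w) * mean_pending i) * u w \<le> (1 + real (H w)) * u w"
    if "w < N" for w
    using u_rate_pos[OF that] mean_pending_bounds[of i]
    by (auto intro!: mult_right_mono mult_left_le)
  then show "0 \<le> round_airtime i" "round_airtime i \<le> round_time"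
    unfolding round_airtime_def sum_airtime_eq_sum_travel_time[symmetric]
    by (auto intro: sum_nonneg sum_mono)
qed

lemma round_airtime_tendsto: "round_airtime \<longlonglongrightarrow> round_time"
proof -
  have "round_airtime \<longlonglongrightarrow> (\<Sum>w<N. (1 + real (H w) * 1) * u w)"
    unfolding round_airtime_def[abs_def] by (intro tendsto_intros mean_pending_tendsto)
  then show ?thesis by (simp add: sum_airtime_eq_sum_travel_time)
qed

lemma mean_slot_dur_bounds:
  "\<sigma> * idle_prob N \<tau> + q * round_airtime i \<le> mean_slot_dur i"
  "mean_slot_dur i \<le> \<sigma> * idle_prob N \<tau> + (q + collision_prob N \<tau>) * round_airtime i"
proof -
  let ?E = "measure_pmf.expectation (pending_pmf i (\<lambda>_. 0))"
  have airtime: "?E (\<lambda>p. \<Sum>w<N. dur p w) = round_airtime i"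
    by (simp add: expectation_tx_dur round_airtime_def finite_set_pmf_pending_pmf
        Bochner_Integration.integral_sum integrable_measure_pmf_finite)
  have eq: "mean_slot_dur i = \<sigma> * idle_prob N \<tau> + q * round_airtime i + ?E collision_time"
    by (simp add: mean_slot_dur_def expectation_slot_dur expectation_add_finite
        finite_set_pmf_pending_pmf airtime)
  have "0 \<le> ?E collision_time"
    using collision_time_bounds by (intro integral_nonneg_AE) auto
  moreover have "?E collision_time \<le> ?E (\<lambda>p. collision_prob N \<tau> * (\<Sum>w<N. dur p w))"
    using collision_time_bounds
    by (intro integral_mono) (auto intro: integrable_measure_pmf_finite finite_set_pmf_pending_pmf)
  ultimately show "\<sigma> * idle_prob N \<tau> + q * round_airtime i \<le> mean_slot_dur i"
    "mean_slot_dur i \<le> \<sigma> * idle_prob N \<tau> + (q + collision_prob N \<tau>) * round_airtime i"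
    unfolding eq by (simp_all add: airtime algebra_simps)
qed

lemma incseq_mean_slot_dur: "incseq mean_slot_dur"
proof (rule incseq_SucI)
  have "mono (\<lambda>p. measure_pmf.expectation txs (slot_dur p))"
    by (intro monoI expectation_txset_pmf_mono slot_dur_mono)
  then show "mean_slot_dur i \<le> mean_slot_dur (Suc i)" for i
    unfolding mean_slot_dur_def by (rule expectation_pending_pmf_le_Suc)
qed

lemma mean_slot_dur_limit:
  obtains D where "mean_slot_dur \<longlonglongrightarrow> D"
    "\<sigma> * idle_prob N \<tau> + q * round_time \<le> D"
    "D \<le> \<sigma> * idle_prob N \<tau> + (q + collision_prob N \<tau>) * round_time"
proof -
  have "0 \<le> q + collision_prob N \<tau>"
    using solo_prob_bounds collision_prob_nonneg[of \<tau> N] tau by simp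
  then have upper: "mean_slot_dur i \<le> \<sigma> * idle_prob N \<tau> + (q + collision_prob N \<tau>) * round_time" for i
    using mean_slot_dur_bounds(2)[of i] round_airtime_bounds(2)[of i] mult_left_mono by fastforce
  then obtain D where D: "mean_slot_dur \<longlonglongrightarrow> D"
    using incseq_convergent[OF incseq_mean_slot_dur] by blast
  have "(\<lambda>i. \<sigma> * idle_prob N \<tau> + q * round_airtime i) \<longlonglongrightarrow> \<sigma> * idle_prob N \<tau> + q * round_time"
    by (intro tendsto_intros round_airtime_tendsto)
  then have "\<sigma> * idle_prob N \<tau> + q * round_time \<le> D"
    using D mean_slot_dur_bounds(1) by (intro LIMSEQ_le) auto
  moreover have "D \<le> \<sigma> * idle_prob N \<tau> + (q + collision_prob N \<tau>) * round_time"
    using D upper by (intro LIMSEQ_le_const2) auto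
  ultimately show ?thesis using D that by blast
qed

lemma mean_slot_bits_tendsto:
  assumes "k < N"
  shows "mean_slot_bits k \<longlonglongrightarrow> q"
proof (cases "hlp k")
  case None
  then have "mean_slot_bits k = (\<lambda>_. q)"
    using assms by (simp add: mean_slot_bits_def expectation_slot_bits fun_eq_iff)
  then show ?thesis by simp
next
  case (Some h)
  then have "mean_slot_bits k = (\<lambda>i. q * mean_pending i)"
    using assms by (simp add: mean_slot_bits_def expectation_slot_bits fun_eq_iff
        expectation_pending_count)
  moreover have "(\<lambda>i. q * mean_pending i) \<longlonglongrightarrow> q * 1"
    by (intro tendsto_intros mean_pending_tendsto)
  ultimately show ?thesis by simp
qed

lemma mean_slot_txtime_tendsto:
  assumes "k < N"
  shows "mean_slot_txtime k \<longlonglongrightarrow> \<tau> * ((1 + real (H k)) * u k)"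
proof -
  have "mean_slot_txtime k = (\<lambda>i. \<tau> * ((1 + real (H k) * mean_pending i) * u k))"
    using assms by (simp add: mean_slot_txtime_def expectation_slot_txtime fun_eq_iff
        expectation_tx_dur)
  moreover have "\<dots> \<longlonglongrightarrow> \<tau> * ((1 + real (H k) * 1) * u k)"
    by (intro tendsto_intros mean_pending_tendsto)
  ultimately show ?thesis by simp
qed

lemma fair_S_fair_B_bounds:
  assumes "k < N"
  shows "convergent (thr_seq N R Rd hlp \<sigma> \<tau> k)" "convergent (txfrac_seq N R Rd hlp \<sigma> \<tau> k)"
    and "round_time + \<sigma> * idle_prob N \<tau> / q \<le> 1 / fair_S N R Rd hlp \<sigma> \<tau> k"
    and "1 / fair_S N R Rd hlp \<sigma> \<tau> k \<le> round_time + (\<sigma> * idle_prob N \<tau> + collision_prob N \<tau> * round_time) / q"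
    and "fair_B N R Rd hlp \<E> \<sigma> \<tau> k = \<E> * ((1 + real (H k)) * u k) / (1 - \<tau>) ^ (N - 1)"
proof -
  obtain D where D: "mean_slot_dur \<longlonglongrightarrow> D"
    "\<sigma> * idle_prob N \<tau> + q * round_time \<le> D"
    "D \<le> \<sigma> * idle_prob N \<tau> + (q + collision_prob N \<tau>) * round_time"
    using mean_slot_dur_limit by blast
  have "0 < \<sigma> * idle_prob N \<tau>" "0 \<le> q * round_time"
    using sigma_pos tau solo_prob_bounds round_airtime_bounds[of 0] by (simp_all add: idle_prob_def)
  then have "0 < D" using D(2) by linarith
  have thr: "thr_seq N R Rd hlp \<sigma> \<tau> k \<longlonglongrightarrow> q / D"
    unfolding thr_seq_def exp_bits_eq_sum exp_time_eq_sum
    using mean_slot_bits_tendsto[OF assms] D(1) \<open>0 < D\<close> by (intro LIMSEQ_ratio_partial_sums) auto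
  have txfrac: "txfrac_seq N R Rd hlp \<sigma> \<tau> k \<longlonglongrightarrow> \<tau> * ((1 + real (H k)) * u k) / D"
    unfolding txfrac_seq_def exp_txtime_eq_sum exp_time_eq_sum
    using mean_slot_txtime_tendsto[OF assms] D(1) \<open>0 < D\<close> by (intro LIMSEQ_ratio_partial_sums) auto
  show "convergent (thr_seq N R Rd hlp \<sigma> \<tau> k)" "convergent (txfrac_seq N R Rd hlp \<sigma> \<tau> k)"
    using thr txfrac by (auto simp: convergent_def)
  have S: "1 / fair_S N R Rd hlp \<sigma> \<tau> k = D / q"
    using limI[OF thr] by (simp add: fair_S_def)
  show "round_time + \<sigma> * idle_prob N \<tau> / q \<le> 1 / fair_S N R Rd hlp \<sigma> \<tau> k"
    "1 / fair_S N R Rd hlp \<sigma> \<tau> k \<le> round_time + (\<sigma> * idle_prob N \<tau> + collision_prob N \<tau> * round_time) / q"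
  proof -
    have "round_time + \<sigma> * idle_prob N \<tau> / q = (\<sigma> * idle_prob N \<tau> + q * round_time) / q"
      "round_time + (\<sigma> * idle_prob N \<tau> + collision_prob N \<tau> * round_time) / q
         = (\<sigma> * idle_prob N \<tau> + (q + collision_prob N \<tau>) * round_time) / q"
      using solo_prob_bounds by (simp_all add: field_simps)
    then show "round_time + \<sigma> * idle_prob N \<tau> / q \<le> 1 / fair_S N R Rd hlp \<sigma> \<tau> k"
      "1 / fair_S N R Rd hlp \<sigma> \<tau> k \<le> round_time + (\<sigma> * idle_prob N \<tau> + collision_prob N \<tau> * round_time) / q"
      unfolding S using D(2,3) solo_prob_bounds by (simp_all add: divide_right_mono)
  qed
  show "fair_B N R Rd hlp \<E> \<sigma> \<tau> k = \<E> * ((1 + real (H k)) * u k) / (1 - \<tau>) ^ (N - 1)"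
    unfolding fair_B_def fair_S_def limI[OF thr] limI[OF txfrac]
    using \<open>0 < D\<close> tau by (simp add: solo_prob_def field_simps)
qed

end

section \<open>Vanishing slot length\<close>

lemma helper_assignment_helper:
  assumes "helper_assignment N R Rd hlp" "k < N" "hlp k = Some h"
  shows "h < N" "h \<noteq> k"
  using assms(1)[unfolded helper_assignment_def, rule_format, OF assms(2)] assms(3) by simp_all

lemma eventually_fairmac_network:
  assumes rates_pos: "\<forall>k<N. \<forall>l<N. k \<noteq> l \<longrightarrow> R k l > 0" "\<forall>k<N. Rd k > 0"
    and helpers: "helper_assignment N R Rd hlp"
    and helpers_direct: "\<forall>k<N. \<forall>h. hlp k = Some h \<longrightarrow> hlp h = None"
    and c_pos: "c > 0"
  shows "\<forall>\<^sub>F \<sigma> in at_right 0. fairmac_network N R Rd hlp \<sigma> (c * sqrt \<sigma>)"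
proof -
  have "\<forall>\<^sub>F \<sigma> in at_right 0. 0 < \<sigma> \<and> \<sigma> < (1 / c)\<^sup>2"
    using c_pos by (auto simp: eventually_at_right_field intro!: exI[of _ "(1 / c)\<^sup>2"])
  then show ?thesis
  proof eventually_elim
    case (elim \<sigma>)
    then have "sqrt \<sigma> < 1 / c" using c_pos real_sqrt_less_mono[of \<sigma> "(1 / c)\<^sup>2"] by simp
    then have "c * sqrt \<sigma> < 1" using c_pos by (simp add: field_simps)
    show ?case
    proof unfold_locales
      show "0 < c * sqrt \<sigma>" "0 < \<sigma>" using elim c_pos by simp_all
      show "c * sqrt \<sigma> < 1" by fact
      show "\<And>k. k < N \<Longrightarrow> 0 < Rd k" using rates_pos(2) by blast
      show "\<And>k h. k < N \<Longrightarrow> hlp k = Some h \<Longrightarrow> h < N"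
        using helper_assignment_helper[OF helpers] by blast
      then show "\<And>k h. k < N \<Longrightarrow> hlp k = Some h \<Longrightarrow> 0 < R k h"
        using rates_pos(1) helper_assignment_helper[OF helpers] by blast
      show "\<And>k h. k < N \<Longrightarrow> hlp k = Some h \<Longrightarrow> hlp h = None"
        using helpers_direct by blast
    qed
  qed
qed

context
  fixes N :: nat and R :: "nat \<Rightarrow> nat \<Rightarrow> real" and Rd :: "nat \<Rightarrow> real"
    and hlp :: "nat \<Rightarrow> nat option" and \<tau> :: "real \<Rightarrow> real"
  assumes network: "\<forall>\<^sub>F \<sigma> in at_right 0. fairmac_network N R Rd hlp \<sigma> (\<tau> \<sigma>)"
    and tau_tendsto: "filterlim \<tau> (at_right 0) (at_right 0)"
begin

lemma eventually_convergent_fair_seqs: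
  assumes "k < N"
  shows "\<forall>\<^sub>F \<sigma> in at_right 0. convergent (thr_seq N R Rd hlp \<sigma> (\<tau> \<sigma>) k)
                              \<and> convergent (txfrac_seq N R Rd hlp \<sigma> (\<tau> \<sigma>) k)"
  using network by eventually_elim (use fairmac_network.fair_S_fair_B_bounds assms in blast)

lemma fair_B_tendsto_coop_B:
  assumes "k < N"
  shows "((\<lambda>\<sigma>. fair_B N R Rd hlp \<E> \<sigma> (\<tau> \<sigma>) k) \<longlongrightarrow> coop_B N R Rd hlp \<E> k) (at_right 0)"
proof -
  have "(\<tau> \<longlongrightarrow> 0) (at_right 0)"
    using tau_tendsto by (simp add: filterlim_at)
  then have "((\<lambda>\<sigma>. \<E> * ((1 + real (num_helped N hlp k)) * u_rate R Rd hlp k) / (1 - \<tau> \<sigma>) ^ (N - 1))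
      \<longlongrightarrow> \<E> * ((1 + real (num_helped N hlp k)) * u_rate R Rd hlp k) / (1 - 0) ^ (N - 1)) (at_right 0)"
    by (intro tendsto_intros) auto
  moreover have "\<forall>\<^sub>F \<sigma> in at_right 0.
      \<E> * ((1 + real (num_helped N hlp k)) * u_rate R Rd hlp k) / (1 - \<tau> \<sigma>) ^ (N - 1)
        = fair_B N R Rd hlp \<E> \<sigma> (\<tau> \<sigma>) k"
    using network by eventually_elim (rule fairmac_network.fair_S_fair_B_bounds(5)[OF _ assms, symmetric])
  ultimately have "((\<lambda>\<sigma>. fair_B N R Rd hlp \<E> \<sigma> (\<tau> \<sigma>) k)
      \<longlongrightarrow> \<E> * ((1 + real (num_helped N hlp k)) * u_rate R Rd hlp k) / (1 - 0) ^ (N - 1)) (at_right 0)"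
    by (rule Lim_transform_eventually)
  then show ?thesis by (simp add: coop_B_def algebra_simps)
qed

text \<open>Idle slots cost about \<open>\<sigma> / \<tau>\<close> per successful transmission and collisions a vanishing
  fraction of one, which is why only \<open>\<sigma> / \<tau> \<rightarrow> 0\<close> is needed.\<close>
lemma fair_S_tendsto_coop_S:
  assumes sigma_tau: "((\<lambda>\<sigma>. \<sigma> / \<tau> \<sigma>) \<longlongrightarrow> 0) (at_right 0)" and "k < N"
  shows "((\<lambda>\<sigma>. fair_S N R Rd hlp \<sigma> (\<tau> \<sigma>) k) \<longlongrightarrow> coop_S N R Rd hlp) (at_right 0)"
proof -
  define Tt where "Tt = (\<Sum>k<N. travel_time R Rd hlp k)"
  define idle_cost where "idle_cost \<sigma> = \<sigma> * idle_prob N (\<tau> \<sigma>) / solo_prob N (\<tau> \<sigma>)" for \<sigma>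
  define coll_cost where "coll_cost \<sigma> = collision_prob N (\<tau> \<sigma>) / solo_prob N (\<tau> \<sigma>) * Tt" for \<sigma>
  obtain \<sigma>0 where "fairmac_network N R Rd hlp \<sigma>0 (\<tau> \<sigma>0)"
    using eventually_happens'[OF _ network] by auto
  then have "0 < Tt" unfolding Tt_def using \<open>k < N\<close> by (intro fairmac_network.round_time_pos) auto
  have "(\<tau> \<longlongrightarrow> 0) (at_right 0)"
    using tau_tendsto by (simp add: filterlim_at)
  then have "((\<lambda>\<sigma>. \<sigma> / \<tau> \<sigma> * ((1 - \<tau> \<sigma>) ^ N / (1 - \<tau> \<sigma>) ^ (N - 1))) \<longlongrightarrow> 0 * ((1 - 0) ^ N / (1 - 0) ^ (N - 1))) (at_right 0)"
    by (intro tendsto_intros sigma_tau) auto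
  moreover have "\<forall>\<^sub>F \<sigma> in at_right 0. \<sigma> / \<tau> \<sigma> * ((1 - \<tau> \<sigma>) ^ N / (1 - \<tau> \<sigma>) ^ (N - 1)) = idle_cost \<sigma>"
    by (simp add: idle_cost_def idle_prob_def solo_prob_def)
  ultimately have idle: "(idle_cost \<longlongrightarrow> 0) (at_right 0)"
    by (simp add: Lim_transform_eventually)
  have coll: "(coll_cost \<longlongrightarrow> 0 * Tt) (at_right 0)"
    unfolding coll_cost_def
    by (intro tendsto_intros filterlim_compose[OF collision_over_solo_tendsto_0 tau_tendsto])
  have lo: "((\<lambda>\<sigma>. Tt + idle_cost \<sigma>) \<longlongrightarrow> Tt) (at_right 0)"
    using tendsto_add[OF tendsto_const idle, of Tt] by simp
  have hi: "((\<lambda>\<sigma>. Tt + idle_cost \<sigma> + coll_cost \<sigma>) \<longlongrightarrow> Tt) (at_right 0)"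
    using tendsto_add[OF tendsto_add[OF tendsto_const idle] coll, of Tt] by simp
  have bounds: "\<forall>\<^sub>F \<sigma> in at_right 0. Tt + idle_cost \<sigma> \<le> 1 / fair_S N R Rd hlp \<sigma> (\<tau> \<sigma>) k
      \<and> 1 / fair_S N R Rd hlp \<sigma> (\<tau> \<sigma>) k \<le> Tt + idle_cost \<sigma> + coll_cost \<sigma>"
    using network
  proof eventually_elim
    case (elim \<sigma>)
    then show ?case
      using fairmac_network.fair_S_fair_B_bounds(3,4)[OF elim \<open>k < N\<close>]
      unfolding Tt_def idle_cost_def coll_cost_def by (simp add: add_divide_distrib)
  qed
  have "((\<lambda>\<sigma>. 1 / fair_S N R Rd hlp \<sigma> (\<tau> \<sigma>) k) \<longlongrightarrow> Tt) (at_right 0)"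
    by (rule tendsto_sandwich[OF _ _ lo hi]) (use bounds in \<open>auto elim: eventually_mono\<close>)+
  then have "((\<lambda>\<sigma>. 1 / (1 / fair_S N R Rd hlp \<sigma> (\<tau> \<sigma>) k)) \<longlongrightarrow> 1 / Tt) (at_right 0)"
    using \<open>0 < Tt\<close> by (intro tendsto_intros) auto
  then show ?thesis by (simp add: coop_S_def Tt_def)
qed

end

lemma filterlim_mult_sqrt_at_right_0:
  assumes "0 < (c :: real)"
  shows "filterlim (\<lambda>\<sigma>. c * sqrt \<sigma>) (at_right 0) (at_right 0)"
proof -
  have "((\<lambda>\<sigma>. c * sqrt \<sigma>) \<longlongrightarrow> c * sqrt 0) (at_right 0)"
    by (intro tendsto_intros)
  moreover have "\<forall>\<^sub>F \<sigma> in at_right 0. c * sqrt \<sigma> \<in> {0<..} \<and> c * sqrt \<sigma> \<noteq> 0"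
    using eventually_at_right_less[of 0] by eventually_elim (use assms in auto)
  ultimately show ?thesis
    by (simp add: filterlim_at)
qed

lemma tendsto_div_mult_sqrt_at_right_0: "((\<lambda>\<sigma>. \<sigma> / (c * sqrt \<sigma>)) \<longlongrightarrow> 0) (at_right 0)"
proof -
  have "((\<lambda>\<sigma>. sqrt \<sigma> / c) \<longlongrightarrow> 0) (at_right 0)"
  proof (rule tendsto_divide_zero)
    show "(sqrt \<longlongrightarrow> 0) (at_right 0)"
      using tendsto_real_sqrt[OF tendsto_ident_at, of 0 "{0<..}"] by simp
  qed
  moreover have "\<forall>\<^sub>F \<sigma> in at_right 0. sqrt \<sigma> / c = \<sigma> / (c * sqrt \<sigma>)"
    using eventually_at_right_less[of 0]
    by eventually_elim (metis divide_divide_eq_left mult.commute real_div_sqrt less_imp_le)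
  ultimately show ?thesis by (rule Lim_transform_eventually)
qed

lemma sum_travel_time_split:
  fixes N :: nat
  shows "(\<Sum>k<N. travel_time R Rd hlp k) =
     (\<Sum>k\<in>{k. k < N \<and> hlp k = None}. 1 / Rd k)
     + (\<Sum>k\<in>{k. k < N \<and> hlp k \<noteq> None}. 1 / R k (the (hlp k)) + 1 / Rd (the (hlp k)))"
proof -
  have "(\<Sum>k<N. travel_time R Rd hlp k) = (\<Sum>k<N. if hlp k = None then 1 / Rd k
          else 1 / R k (the (hlp k)) + 1 / Rd (the (hlp k)))"
    by (rule sum.cong) (auto simp: travel_time_def split: option.split)
  also have "\<dots> = (\<Sum>k\<in>{k. k < N \<and> hlp k = None}. 1 / Rd k)
     + (\<Sum>k\<in>{k. k < N \<and> hlp k \<noteq> None}. 1 / R k (the (hlp k)) + 1 / Rd (the (hlp k)))"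
    by (subst sum.If_cases) (auto intro!: arg_cong2[where f = "(+)"] sum.cong)
  finally show ?thesis .
qed

theorem proposition3:
  fixes N :: nat and R :: "nat \<Rightarrow> nat \<Rightarrow> real" and Rd :: "nat \<Rightarrow> real"
    and hlp :: "nat \<Rightarrow> nat option" and \<E> c :: real
  assumes rates_pos: "\<forall>k<N. \<forall>l<N. k \<noteq> l \<longrightarrow> R k l > 0" "\<forall>k<N. Rd k > 0"
    and helpers: "helper_assignment N R Rd hlp"
    and helpers_direct: "\<forall>k<N. \<forall>h. hlp k = Some h \<longrightarrow> hlp h = None"
    and power: "\<E> > 0"
    and c_pos: "c > 0"
  shows "coop_S N R Rd hlp =
           1 / ((\<Sum>k\<in>{k. k < N \<and> hlp k = None}. 1 / Rd k)
                + (\<Sum>k\<in>{k. k < N \<and> hlp k \<noteq> None}. 1 / R k (the (hlp k)) + 1 / Rd (the (hlp k))))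
       \<and> (\<forall>k<N.
            (\<forall>\<^sub>F \<sigma> in at_right 0. convergent (thr_seq N R Rd hlp \<sigma> (c * sqrt \<sigma>) k)
                                   \<and> convergent (txfrac_seq N R Rd hlp \<sigma> (c * sqrt \<sigma>) k))
          \<and> ((\<lambda>\<sigma>. fair_S N R Rd hlp \<sigma> (c * sqrt \<sigma>) k) \<longlongrightarrow> coop_S N R Rd hlp) (at_right 0)
          \<and> ((\<lambda>\<sigma>. fair_B N R Rd hlp \<E> \<sigma> (c * sqrt \<sigma>) k) \<longlongrightarrow> coop_B N R Rd hlp \<E> k) (at_right 0)
          \<and> coop_B N R Rd hlp \<E> k = (real (num_helped N hlp k) + 1) * u_rate R Rd hlp k * \<E>)"
proof -
  note network = eventually_fairmac_network[OF rates_pos helpers helpers_direct c_pos]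
  note tau = filterlim_mult_sqrt_at_right_0[OF c_pos]
  show ?thesis
    using sum_travel_time_split
      eventually_convergent_fair_seqs[OF network tau]
      fair_S_tendsto_coop_S[OF network tau tendsto_div_mult_sqrt_at_right_0]
      fair_B_tendsto_coop_B[OF network tau]
    by (simp add: coop_S_def coop_B_def)
qed

end
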